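(* Let $\min(p,q)\ge 2$. Let $M_0, M_1, M_2$ be three Minkowski patches of $\widetilde{\mathrm{Ein}}^{p,q}$ and $s : M_0 \rightarrow \mathbb{R}^{p,q}$ a stereographic projection. Assume that $s(M_0 \cap M_1) = H_{v,\alpha}$ and $s(M_0 \cap M_2) = H_{v,\beta}$ for some $v \in \mathcal{C}\setminus\{0\}$ and $\alpha,\beta \in \mathbb{R}$. Then $\partial M_0 \cap M_1 = \partial M_0 \cap M_2$.
   Context: $\widetilde{\mathrm{Ein}}^{p,q}\cong\mathbb{S}^p\times\mathbb{S}^q$ is the set of isotropic vectors of Euclidean norm 1 in $\mathbb{R}^{p+1,q+1}$, double covering $\mathrm{Ein}^{p,q}$ (isotropic lines) via $\pi_{\mathbf{X}}$. Minkowski patches of $\widetilde{\mathrm{Ein}}^{p,q}$ are the connected components of $\pi_{\mathbf{X}}^{-1}(\{[u]:B(w,u)\neq0\})$, $w$ isotropic; $\partial M_0$ denotes the topological boundary in $\widetilde{\mathrm{Ein}}^{p,q}$. A stereographic projection is a conformal diffeomorphism from a Minkowski patch onto $\mathbb{R}^{p,q}$. On $\mathbb{R}^{p,q}$ ($n=p+q$): $b(v,w) = -v_1w_1 - \cdots - v_pw_p + v_{p+1}w_{p+1} + \cdots + v_nw_n$, $\mathcal{C}=\{v:b(v,v)=0\}$, $H_{v,\alpha}=\{w: b(v,w)>\alpha\}$. *)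

theory Defs
  imports "HOL-Analysis.Analysis"
begin

text \<open>On R^{p,q} = real^'p x real^'q this is b; on R^{p+1,q+1} =
(real x real^'p) x (real x real^'q) this is B.\<close>
definition pform :: "('a::real_inner \<times> 'b::real_inner) \<Rightarrow> ('a \<times> 'b) \<Rightarrow> real" where
  "pform u w = - (fst u \<bullet> fst w) + (snd u \<bullet> snd w)"

definition Ein_tilde :: "('a::real_inner \<times> 'b::real_inner) set" where
  "Ein_tilde = {u. pform u u = 0 \<and> norm u = 1}"

definition minkowski_patch :: "('a::real_inner \<times> 'b::real_inner) set \<Rightarrow> bool" where
  "minkowski_patch M \<longleftrightarrow> (\<exists>w. w \<noteq> 0 \<and> pform w w = 0 \<and>
       M \<in> components {u \<in> Ein_tilde. pform w u \<noteq> 0})"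

primrec dder :: "'a list \<Rightarrow> ('a::real_normed_vector \<Rightarrow> 'b::real_normed_vector) \<Rightarrow> 'a \<Rightarrow> 'b" where
  "dder [] f = f"
| "dder (v # vs) f = (\<lambda>x. frechet_derivative (dder vs f) (at x) v)"

definition smooth_on :: "'a::real_normed_vector set \<Rightarrow> ('a \<Rightarrow> 'b::real_normed_vector) \<Rightarrow> bool" where
  "smooth_on U f \<longleftrightarrow> open U \<and> (\<forall>vs. \<forall>x\<in>U. dder vs f differentiable (at x))"

definition smooth_map_on :: "'a::real_normed_vector set \<Rightarrow> ('a \<Rightarrow> 'b::real_normed_vector) \<Rightarrow> bool" where
  "smooth_map_on S f \<longleftrightarrow> (\<forall>x\<in>S. \<exists>U F. x \<in> U \<and> smooth_on U F \<and> (\<forall>y\<in>U \<inter> S. F y = f y))"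

definition diffeo_betw :: "'a::real_normed_vector set \<Rightarrow> 'b::real_normed_vector set \<Rightarrow> ('a \<Rightarrow> 'b) \<Rightarrow> bool" where
  "diffeo_betw S T f \<longleftrightarrow> bij_betw f S T \<and> smooth_map_on S f \<and> smooth_map_on T (inv_into S f)"

text \<open>Tangent space of Ein_tilde at x (kernel of the differentials of the defining
equations pform u u = 0 and u . u = 1).\<close>
definition ein_tangent :: "('a::real_inner \<times> 'b::real_inner) \<Rightarrow> ('a \<times> 'b) set" where
  "ein_tangent x = {u. pform x u = 0 \<and> x \<bullet> u = 0}"

text \<open>Stereographic projection: conformal diffeomorphism from the patch M onto R^{p,q}
(conformal structure on Ein_tilde induced by B restricted to tangent spaces).\<close>
definition stereographic_projection ::
  "('a::real_inner \<times> 'b::real_inner) set \<Rightarrow>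
   ('a \<times> 'b \<Rightarrow> ('e::real_inner \<times> 'f::real_inner)) \<Rightarrow> bool" where
  "stereographic_projection M s \<longleftrightarrow> diffeo_betw M UNIV s \<and>
     (\<forall>x\<in>M. \<exists>D lam. (s has_derivative D) (at x within M) \<and> lam > 0 \<and>
        (\<forall>u\<in>ein_tangent x. \<forall>w\<in>ein_tangent x. pform (D u) (D w) = lam * pform u w))"

definition halfspace :: "('a::real_inner \<times> 'b::real_inner) \<Rightarrow> real \<Rightarrow> ('a \<times> 'b) set" where
  "halfspace v \<alpha> = {w. pform v w > \<alpha>}"

end

theory Submission
  imports Defs
begin

text \<open>A Minkowski patch is one side \<open>{u \<in> Ein. B(w,u) > 0}\<close> of the lightcone of an isotropic
  vector \<open>w\<close>, and its frontier lies in the hyperplane \<open>B(w,\<cdot>) = 0\<close>. Write \<open>M\<^sub>i\<close> for the side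
  of \<open>w\<^sub>i\<close> and assume \<open>\<beta> \<le> \<alpha>\<close>. Since \<open>s\<close> is a bijection (nothing else about it is needed),
  \<open>M\<^sub>0 \<inter> M\<^sub>1 \<subseteq> M\<^sub>2\<close>, \<open>M\<^sub>0 \<inter> M\<^sub>1 \<noteq> {}\<close> and \<open>M\<^sub>0 \<noteq> M\<^sub>0 \<inter> M\<^sub>2\<close>. When both signature
  factors have dimension at least 3, the implication
  \<open>B(w\<^sub>0,u) > 0 \<and> B(w\<^sub>1,u) > 0 \<Longrightarrow> B(w\<^sub>2,u) > 0\<close> spreads from the null cone to all \<open>u\<close>,
  so by Farkas' lemma \<open>B(w\<^sub>2,\<cdot>) = a B(w\<^sub>0,\<cdot>) + b B(w\<^sub>1,\<cdot>)\<close> with \<open>a \<ge> 0\<close>, and \<open>b > 0\<close> because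
  \<open>M\<^sub>0 \<noteq> M\<^sub>0 \<inter> M\<^sub>2\<close>. Hence \<open>B(w\<^sub>1,\<cdot>)\<close> and \<open>B(w\<^sub>2,\<cdot>)\<close> have the same sign on \<open>B(w\<^sub>0,\<cdot>) = 0\<close>.\<close>

definition pdual :: "('a::real_inner \<times> 'b::real_inner) \<Rightarrow> 'a \<times> 'b" where
  "pdual w = (- fst w, snd w)"

lemma pform_eq_inner_pdual: "pform w u = pdual w \<bullet> u"
  by (simp add: pform_def pdual_def inner_prod_def)

lemma pform_commute: "pform u w = pform w u"
  by (simp add: pform_def inner_commute)

lemma pform_add_left: "pform (a + b) u = pform a u + pform b u"
  and pform_add_right: "pform u (a + b) = pform u a + pform u b"
  and pform_diff_left: "pform (a - b) u = pform a u - pform b u"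
  and pform_diff_right: "pform u (a - b) = pform u a - pform u b"
  and pform_scaleR_left: "pform (c *\<^sub>R a) u = c * pform a u"
  and pform_scaleR_right: "pform u (c *\<^sub>R a) = c * pform u a"
  and pform_minus_left: "pform (- a) u = - pform a u"
  and pform_minus_right: "pform u (- a) = - pform u a"
  by (simp_all add: pform_def inner_add_left inner_add_right inner_diff_left inner_diff_right
      algebra_simps)

lemmas pform_simps = pform_add_left pform_add_right pform_diff_left pform_diff_right
  pform_scaleR_left pform_scaleR_right pform_minus_left pform_minus_right

lemma pform_pdual_self: "pform w (pdual w) = (norm w)\<^sup>2"
  by (simp add: pform_def pdual_def power2_norm_eq_inner inner_prod_def)

lemma pform_pdual_pdual: "pform (pdual w) (pdual w) = pform w w"
  by (simp add: pform_def pdual_def)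

lemma pform_scaled_pdual:
  assumes "w \<noteq> 0"
  shows "pform w ((c / (norm w)\<^sup>2) *\<^sub>R pdual w) = c"
  using assms by (simp add: pform_simps pform_pdual_self)

lemma scaleR_inverse_norm_in_Ein_tilde:
  assumes "pform n n = 0" "n \<noteq> 0"
  shows "(1 / norm n) *\<^sub>R n \<in> Ein_tilde"
  using assms by (simp add: Ein_tilde_def pform_simps)

definition Ein_positive :: "('a::real_inner \<times> 'b::real_inner) \<Rightarrow> ('a \<times> 'b) set" where
  "Ein_positive w = {u \<in> Ein_tilde. pform w u > 0}"

text \<open>The map is the inverse of a stereographic projection, from the null plane
  \<open>{w, f}\<^sup>\<bottom>\<close> onto the null vectors \<open>u\<close> with \<open>B(w,u) = 1\<close>.\<close>
lemma null_vectors_level_one_parametrization: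
  fixes w f :: "'a::real_inner \<times> 'b::real_inner"
  assumes ww: "pform w w = 0" and ff: "pform f f = 0" and wf: "pform w f = 1"
  shows "{u. pform u u = 0 \<and> pform w u = 1} =
    (\<lambda>z. f + z - (pform z z / 2) *\<^sub>R w) ` {z. pform w z = 0 \<and> pform f z = 0}"
proof (intro equalityI subsetI)
  have fw: "pform f w = 1" using wf by (simp add: pform_commute)
  fix u assume "u \<in> {u. pform u u = 0 \<and> pform w u = 1}"
  hence uu: "pform u u = 0" and wu: "pform w u = 1" by auto
  define z where "z = u - f - pform f u *\<^sub>R w"
  have uw: "pform u w = 1" and uf: "pform u f = pform f u"
    using wu by (simp_all add: pform_commute)
  have "pform w z = 0" "pform f z = 0" using wu ww wf ff fw
    by (simp_all add: z_def pform_simps)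
  moreover have "pform z z = - 2 * pform f u"
    using uu ww ff wf fw wu uw uf by (simp add: z_def pform_simps algebra_simps)
  ultimately show "u \<in> (\<lambda>z. f + z - (pform z z / 2) *\<^sub>R w) ` {z. pform w z = 0 \<and> pform f z = 0}"
    by (intro image_eqI[of _ _ z]) (simp_all add: z_def)
next
  fix u assume "u \<in> (\<lambda>z. f + z - (pform z z / 2) *\<^sub>R w) ` {z. pform w z = 0 \<and> pform f z = 0}"
  then obtain z where z: "pform w z = 0" "pform f z = 0" and u: "u = f + z - (pform z z / 2) *\<^sub>R w"
    by blast
  have "pform z w = 0" "pform z f = 0" "pform f w = 1" using z wf by (simp_all add: pform_commute)
  with z ww ff wf show "u \<in> {u. pform u u = 0 \<and> pform w u = 1}"
    by (simp add: u pform_simps algebra_simps)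
qed

lemma Ein_positive_eq_normalized_level_one:
  assumes "pform w w = 0"
  shows "Ein_positive w = (\<lambda>u. (1 / norm u) *\<^sub>R u) ` {u. pform u u = 0 \<and> pform w u = 1}"
proof (intro equalityI subsetI)
  fix u assume "u \<in> Ein_positive w"
  hence u: "pform u u = 0" "norm u = 1" "pform w u > 0"
    by (auto simp: Ein_positive_def Ein_tilde_def)
  let ?u' = "(1 / pform w u) *\<^sub>R u"
  have "?u' \<in> {u. pform u u = 0 \<and> pform w u = 1}" using u by (simp add: pform_simps)
  moreover have "u = (1 / norm ?u') *\<^sub>R ?u'" using u by simp
  ultimately show "u \<in> (\<lambda>u. (1 / norm u) *\<^sub>R u) ` {u. pform u u = 0 \<and> pform w u = 1}"
    by blast
next
  fix u assume "u \<in> (\<lambda>u. (1 / norm u) *\<^sub>R u) ` {u. pform u u = 0 \<and> pform w u = 1}"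
  then obtain n where n: "pform n n = 0" "pform w n = 1" and u: "u = (1 / norm n) *\<^sub>R n" by blast
  have "n \<noteq> 0" using n(2) by (auto simp: pform_def)
  then show "u \<in> Ein_positive w"
    using scaleR_inverse_norm_in_Ein_tilde[OF n(1)] n by (simp add: u Ein_positive_def pform_simps)
qed

lemma connected_Ein_positive:
  fixes w :: "'a::euclidean_space \<times> 'b::euclidean_space"
  assumes ww: "pform w w = 0" and "w \<noteq> 0"
  shows "connected (Ein_positive w)"
proof -
  define f where "f = (1 / (norm w)\<^sup>2) *\<^sub>R pdual w"
  have wf: "pform w f = 1" using pform_scaled_pdual[OF \<open>w \<noteq> 0\<close>] by (simp add: f_def)
  have ff: "pform f f = 0" using ww by (simp add: f_def pform_simps pform_pdual_pdual)
  let ?W = "{z. pform w z = 0 \<and> pform f z = 0}"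
  let ?L = "{u. pform u u = 0 \<and> pform w u = 1}"
  have "?W = {z. pdual w \<bullet> z = 0} \<inter> {z. pdual f \<bullet> z = 0}"
    by (auto simp: pform_eq_inner_pdual)
  hence "connected ?W" by (simp add: convex_connected convex_Int convex_hyperplane)
  moreover have "continuous_on ?W (\<lambda>z. f + z - (pform z z / 2) *\<^sub>R w)"
    unfolding pform_eq_inner_pdual pdual_def by (intro continuous_intros) auto
  ultimately have "connected ?L"
    unfolding null_vectors_level_one_parametrization[OF ww ff wf]
    by (rule connected_continuous_image[rotated])
  moreover have "continuous_on ?L (\<lambda>u. (1 / norm u) *\<^sub>R u)"
    by (intro continuous_intros) (auto simp: pform_def zero_prod_def)
  ultimately show ?thesis
    unfolding Ein_positive_eq_normalized_level_one[OF ww]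
    by (rule connected_continuous_image[rotated])
qed

lemma minkowski_patch_obtain:
  fixes M :: "('a::euclidean_space \<times> 'b::euclidean_space) set"
  assumes "minkowski_patch M"
  obtains w where "w \<noteq> 0" "pform w w = 0" "M = Ein_positive w"
proof -
  obtain w0 where "w0 \<noteq> 0" "pform w0 w0 = 0"
    and C: "M \<in> components {u \<in> Ein_tilde. pform w0 u \<noteq> 0}"
    using assms unfolding minkowski_patch_def by blast
  let ?S = "{u \<in> Ein_tilde. pform w0 u \<noteq> 0}"
  have M: "M \<noteq> {}" "M \<subseteq> ?S" "connected M"
    and maximal: "\<And>D. D \<noteq> {} \<Longrightarrow> M \<subseteq> D \<Longrightarrow> D \<subseteq> ?S \<Longrightarrow> connected D \<Longrightarrow> D = M"
    using C unfolding in_components_maximal by blast+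
  obtain x where x: "x \<in> M" using M(1) by blast
  define w where "w = (if pform w0 x > 0 then w0 else - w0)"
  have w: "w \<noteq> 0" "pform w w = 0" "pform w x > 0"
    using \<open>w0 \<noteq> 0\<close> \<open>pform w0 w0 = 0\<close> x M(2) by (auto simp: w_def pform_simps)
  have S: "?S = {u \<in> Ein_tilde. pform w u \<noteq> 0}" by (auto simp: w_def pform_simps)
  have "M \<subseteq> Ein_positive w"
  proof
    fix y assume y: "y \<in> M"
    have "pform w y > 0"
    proof (rule ccontr)
      assume "\<not> pform w y > 0"
      then obtain z where "z \<in> M" "pdual w \<bullet> z = 0"
        using connected_ivt_hyperplane[OF M(3) y x, of "pdual w" 0] w(3)
        by (auto simp: pform_eq_inner_pdual)
      with M(2) S show False by (auto simp: pform_eq_inner_pdual)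
    qed
    with y M(2) show "y \<in> Ein_positive w" by (auto simp: Ein_positive_def)
  qed
  moreover have "Ein_positive w \<subseteq> ?S" by (auto simp: S Ein_positive_def)
  ultimately have "Ein_positive w = M"
    using maximal M(1) connected_Ein_positive[OF w(2,1)] by blast
  with w show thesis by (intro that) auto
qed

lemma frontier_of_Ein_positive_subset:
  "top_of_set Ein_tilde frontier_of Ein_positive w \<subseteq> {u. pform w u = 0}"
proof -
  let ?X = "top_of_set Ein_tilde"
  have "?X closure_of Ein_positive w \<subseteq> Ein_tilde \<inter> {u. pdual w \<bullet> u \<ge> 0}"
    by (rule closure_of_minimal)
      (auto simp: Ein_positive_def pform_eq_inner_pdual intro!: closedin_closed_Int closed_halfspace_ge)
  moreover have "?X closure_of (topspace ?X - Ein_positive w) \<subseteq> Ein_tilde \<inter> {u. pdual w \<bullet> u \<le> 0}"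
    by (rule closure_of_minimal)
      (auto simp: Ein_positive_def pform_eq_inner_pdual intro!: closedin_closed_Int closed_halfspace_le)
  ultimately show ?thesis
    unfolding frontier_of_closures by (force simp: pform_eq_inner_pdual)
qed

lemma nonneg_combination_if_open_wedge_implication:
  fixes g0 g1 g2 y0 :: "'a::euclidean_space"
  assumes H: "\<And>y. g0 \<bullet> y > 0 \<Longrightarrow> g1 \<bullet> y > 0 \<Longrightarrow> g2 \<bullet> y > 0"
    and y0: "g0 \<bullet> y0 > 0" "g1 \<bullet> y0 > 0"
  obtains a b where "a \<ge> 0" "b \<ge> 0" "g2 = a *\<^sub>R g0 + b *\<^sub>R g1"
proof -
  let ?C = "conic hull (convex hull {g0, g1})"
  have "g2 \<in> ?C"
  proof (rule ccontr)
    assume "g2 \<notin> ?C"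
    moreover have "closed ?C"
      by (intro closed_conic_hull_strong disjI2 disjI1 polytope_convex_hull) simp
    ultimately obtain a b where sep: "a \<bullet> g2 < b" "\<And>x. x \<in> ?C \<Longrightarrow> b < a \<bullet> x"
      using separating_hyperplane_closed_point[OF convex_conic_hull[OF convex_convex_hull]]
      by blast
    have "b < 0" using sep(2)[of 0] by simp
    have a_nonneg: "a \<bullet> g \<ge> 0" if "g \<in> {g0, g1}" for g
    proof (rule ccontr)
      assume "\<not> a \<bullet> g \<ge> 0"
      hence "(b / (a \<bullet> g)) *\<^sub>R g \<in> ?C"
        using \<open>b < 0\<close> that by (intro conic_mul[OF conic_conic_hull] hull_inc)
          (auto simp: hull_inc divide_nonpos_neg)
      with sep(2) show False using \<open>\<not> a \<bullet> g \<ge> 0\<close> by fastforce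
    qed
    define \<epsilon> where "\<epsilon> = - (a \<bullet> g2) / (\<bar>g2 \<bullet> y0\<bar> + 1)"
    have "\<epsilon> > 0" unfolding \<epsilon>_def using sep(1) \<open>b < 0\<close> by (intro divide_pos_pos) auto
    define y where "y = a + \<epsilon> *\<^sub>R y0"
    have "g0 \<bullet> y > 0" "g1 \<bullet> y > 0"
      using a_nonneg[of g0] a_nonneg[of g1] y0 \<open>\<epsilon> > 0\<close>
      by (auto simp: y_def inner_add_right inner_commute[of g0 a] inner_commute[of g1 a]
          intro!: add_nonneg_pos)
    hence "g2 \<bullet> y > 0" by (rule H)
    have "\<epsilon> * (g2 \<bullet> y0) \<le> \<epsilon> * \<bar>g2 \<bullet> y0\<bar>"
      using \<open>\<epsilon> > 0\<close> by (intro mult_left_mono) auto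
    also have "\<dots> < \<epsilon> * (\<bar>g2 \<bullet> y0\<bar> + 1)" using \<open>\<epsilon> > 0\<close> by simp
    also have "\<dots> = - (a \<bullet> g2)" by (simp add: \<epsilon>_def)
    finally show False
      using \<open>g2 \<bullet> y > 0\<close> by (simp add: y_def inner_add_right inner_commute[of a g2])
  qed
  then obtain c u v where "c \<ge> 0" "u \<ge> 0" "v \<ge> 0" "g2 = c *\<^sub>R (u *\<^sub>R g0 + v *\<^sub>R g1)"
    by (auto simp: conic_hull_explicit convex_hull_2)
  then show thesis
    by (intro that[of "c * u" "c * v"]) (simp_all add: scaleR_add_right)
qed

lemma slope_zero_if_pos_linear_plus_reciprocal:
  fixes C m k :: real
  assumes H: "\<And>t. t \<noteq> 0 \<Longrightarrow> C + m * t + k / t > 0"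
  shows "m = 0"
proof (rule ccontr)
  assume m: "m \<noteq> 0"
  define T where "T = (\<bar>C\<bar> + \<bar>k\<bar> + 1) / \<bar>m\<bar> + 1"
  have T1: "T \<ge> 1" unfolding T_def using m by (simp add: divide_nonneg_pos)
  have mT: "\<bar>m\<bar> * T = \<bar>C\<bar> + \<bar>k\<bar> + 1 + \<bar>m\<bar>" unfolding T_def using m
    by (simp add: field_simps)
  define t where "t = - sgn m * T"
  have t0: "t \<noteq> 0" using T1 m by (simp add: t_def sgn_if)
  have mt: "m * t = - (\<bar>m\<bar> * T)" using m by (simp add: t_def sgn_if)
  have "\<bar>k / t\<bar> = \<bar>k\<bar> / T" using m T1 by (simp add: t_def sgn_if abs_divide)
  also have "\<dots> \<le> \<bar>k\<bar> / 1" using T1 by (intro divide_left_mono) auto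
  finally have "k / t \<le> \<bar>k\<bar>" by linarith
  hence "C + m * t + k / t < 0" using mt mT abs_ge_self[of C] by linarith
  with H[OF t0] show False by simp
qed

text \<open>The parametrizations \<open>X = (t + K/t)/2, Y = \<plusminus>(t - K/t)/2\<close> of the two branches
  reduce positivity on the hyperbola to the previous lemma; this works also when \<open>K = 0\<close>.\<close>
lemma affine_pos_on_hyperbola_imp_const:
  fixes K C d c :: real
  assumes H: "\<And>X Y. X\<^sup>2 - Y\<^sup>2 = K \<Longrightarrow> C + d * X + c * Y > 0"
  shows "d = 0 \<and> c = 0 \<and> C > 0"
proof -
  have branch: "C + ((d + \<sigma> * c) / 2) * t + ((d - \<sigma> * c) * K / 2) / t > 0"
    if "t \<noteq> 0" "\<sigma> = 1 \<or> \<sigma> = -1" for t \<sigma>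
  proof -
    have "((t + K / t) / 2)\<^sup>2 - (\<sigma> * (t - K / t) / 2)\<^sup>2 = K" using that
      by (auto simp: power2_eq_square field_simps)
    from H[OF this] have "C + d * ((t + K / t) / 2) + c * (\<sigma> * (t - K / t) / 2) > 0" .
    moreover have "d * ((t + K / t) / 2) + c * (\<sigma> * (t - K / t) / 2)
        = ((d + \<sigma> * c) / 2) * t + ((d - \<sigma> * c) * K / 2) / t"
      using that by (simp add: field_simps)
    ultimately show ?thesis by linarith
  qed
  have "(d + c) / 2 = 0"
    by (rule slope_zero_if_pos_linear_plus_reciprocal[of C _ "(d - c) * K / 2"])
      (use branch[of _ 1] in simp)
  moreover have "(d - c) / 2 = 0"
    by (rule slope_zero_if_pos_linear_plus_reciprocal[of C _ "(d + c) * K / 2"])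
      (use branch[of _ "-1"] in simp)
  ultimately have "d = 0" "c = 0" by auto
  with branch[of 1 1] show ?thesis by simp
qed

lemma unit_vector_orthogonal_to_two:
  fixes a b :: "'a::euclidean_space"
  assumes "DIM('a) \<ge> 3"
  obtains e where "norm e = 1" "e \<bullet> a = 0" "e \<bullet> b = 0"
proof -
  have "dim {a, b} \<le> card {a, b}" by (rule dim_le_card) (auto intro: span_base)
  also have "\<dots> \<le> 2" by (simp add: card_insert_le_m1)
  finally have "dim {a, b} < DIM('a)" using assms by linarith
  then obtain x where x: "x \<noteq> 0" "\<And>y. y \<in> span {a, b} \<Longrightarrow> orthogonal x y"
    using orthogonal_to_subspace_exists[of "{a, b}"] by blast
  have "x \<bullet> a = 0" "x \<bullet> b = 0" using x(2)[of a] x(2)[of b] by (auto simp: orthogonal_def span_base)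
  then show ?thesis using x(1) by (intro that[of "(1 / norm x) *\<^sub>R x"]) auto
qed

lemma pform_shift_along_units:
  fixes x e :: "'a::real_inner" and y f :: "'b::real_inner"
  assumes "norm e = 1" "norm f = 1"
  shows "pform (x + s *\<^sub>R e, y + t *\<^sub>R f) (x + s *\<^sub>R e, y + t *\<^sub>R f)
    = (y \<bullet> y - (y \<bullet> f)\<^sup>2 - x \<bullet> x + (x \<bullet> e)\<^sup>2) - (s + x \<bullet> e)\<^sup>2 + (t + y \<bullet> f)\<^sup>2"
proof -
  have "e \<bullet> e = 1" "f \<bullet> f = 1" using assms by (simp_all add: norm_eq_1)
  then show ?thesis
    by (simp add: pform_def inner_add_left inner_add_right inner_commute power2_eq_square
        algebra_simps)
qed

text \<open>Since the dimensions are at least 3, moving a point along a unit vector \<open>e\<close> (resp. \<open>f\<close>)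
  in the first (resp. second) factor, orthogonal to the relevant components of \<open>g\<^sub>0\<close> and
  \<open>g\<^sub>1\<close>, keeps it in the open wedge; these moves reach a whole hyperbola of null vectors,
  on which \<open>g\<^sub>2\<close> stays positive, and that forces \<open>g\<^sub>2\<close> to be orthogonal to \<open>e\<close> and \<open>f\<close>.\<close>
lemma open_wedge_implication_from_Ein_tilde:
  fixes g0 g1 g2 u :: "'a::euclidean_space \<times> 'b::euclidean_space"
  assumes dA: "DIM('a) \<ge> 3" and dB: "DIM('b) \<ge> 3"
    and H: "\<And>n. n \<in> Ein_tilde \<Longrightarrow> g0 \<bullet> n > 0 \<Longrightarrow> g1 \<bullet> n > 0 \<Longrightarrow> g2 \<bullet> n > 0"
    and u: "g0 \<bullet> u > 0" "g1 \<bullet> u > 0"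
  shows "g2 \<bullet> u > 0"
proof -
  have H_null: "g2 \<bullet> n > 0" if "pform n n = 0" "g0 \<bullet> n > 0" "g1 \<bullet> n > 0" for n
  proof -
    have "n \<noteq> 0" using that(2) by auto
    with that H[OF scaleR_inverse_norm_in_Ein_tilde[OF that(1)]] show ?thesis
      by (simp add: zero_less_divide_iff)
  qed
  obtain e where e: "norm e = 1" "e \<bullet> fst g0 = 0" "e \<bullet> fst g1 = 0"
    using unit_vector_orthogonal_to_two[OF dA] by blast
  obtain f where f: "norm f = 1" "f \<bullet> snd g0 = 0" "f \<bullet> snd g1 = 0"
    using unit_vector_orthogonal_to_two[OF dB] by blast
  define \<alpha> \<beta> where "\<alpha> = fst u \<bullet> e" and "\<beta> = snd u \<bullet> f"
  define K where "K = snd u \<bullet> snd u - \<beta>\<^sup>2 - fst u \<bullet> fst u + \<alpha>\<^sup>2"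
  define d c where "d = fst g2 \<bullet> e" and "c = snd g2 \<bullet> f"
  define n where "n X Y = (fst u + (X - \<alpha>) *\<^sub>R e, snd u + (Y - \<beta>) *\<^sub>R f)" for X Y
  have g_n: "g \<bullet> n X Y = g \<bullet> u + (X - \<alpha>) * (fst g \<bullet> e) + (Y - \<beta>) * (snd g \<bullet> f)" for g X Y
    by (simp add: n_def inner_prod_def inner_add_right algebra_simps)
  have "(g2 \<bullet> u - \<alpha> * d - \<beta> * c) + d * X + c * Y > 0" if "X\<^sup>2 - Y\<^sup>2 = K" for X Y
  proof -
    have "pform (n X Y) (n X Y) = 0"
      using pform_shift_along_units[OF e(1) f(1)] that by (simp add: n_def K_def \<alpha>_def \<beta>_def)
    moreover have "g0 \<bullet> n X Y > 0" "g1 \<bullet> n X Y > 0"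
      using g_n u e f by (simp_all add: inner_commute)
    ultimately have "g2 \<bullet> n X Y > 0" by (rule H_null)
    thus ?thesis by (simp add: g_n d_def c_def algebra_simps)
  qed
  then show ?thesis
    using affine_pos_on_hyperbola_imp_const by fastforce
qed

lemma boundary_pform_pos_iff_if_nested:
  fixes w0 w1 w2 :: "'a::euclidean_space \<times> 'b::euclidean_space"
  assumes dA: "DIM('a) \<ge> 3" and dB: "DIM('b) \<ge> 3"
    and sub: "Ein_positive w0 \<inter> Ein_positive w1 \<subseteq> Ein_positive w2"
    and ne: "Ein_positive w0 \<inter> Ein_positive w1 \<noteq> {}"
    and not_sub: "\<not> Ein_positive w0 \<subseteq> Ein_positive w2"
    and u: "pform w0 u = 0"
  shows "pform w1 u > 0 \<longleftrightarrow> pform w2 u > 0"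
proof -
  have "pdual w2 \<bullet> y > 0" if "pdual w0 \<bullet> y > 0" "pdual w1 \<bullet> y > 0" for y
    by (rule open_wedge_implication_from_Ein_tilde[OF dA dB _ that])
      (use sub in \<open>auto simp: Ein_positive_def pform_eq_inner_pdual\<close>)
  moreover obtain y0 where "pdual w0 \<bullet> y0 > 0" "pdual w1 \<bullet> y0 > 0"
    using ne by (auto simp: Ein_positive_def pform_eq_inner_pdual)
  ultimately obtain a b where ab: "a \<ge> 0" "b \<ge> 0" "pdual w2 = a *\<^sub>R pdual w0 + b *\<^sub>R pdual w1"
    by (rule nonneg_combination_if_open_wedge_implication)
  have lin: "pform w2 x = a * pform w0 x + b * pform w1 x" for x
    by (simp add: pform_eq_inner_pdual ab(3) inner_add_left)
  have "b > 0"
  proof (rule ccontr)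
    assume "\<not> b > 0"
    with ab have lin0: "pform w2 x = a * pform w0 x" for x by (simp add: lin)
    obtain n where n: "n \<in> Ein_positive w0" "n \<notin> Ein_positive w2" using not_sub by blast
    hence "a = 0" using ab(1) lin0[of n] by (auto simp: Ein_positive_def zero_less_mult_iff)
    with lin0 have "Ein_positive w2 = {}" by (simp add: Ein_positive_def)
    with sub ne show False by blast
  qed
  with lin[of u] u show ?thesis by (simp add: zero_less_mult_iff)
qed

lemma frontier_of_Ein_positive_inter_eq_if_nested:
  fixes w0 w1 w2 :: "'a::euclidean_space \<times> 'b::euclidean_space"
  assumes "DIM('a) \<ge> 3" "DIM('b) \<ge> 3"
    and "Ein_positive w0 \<inter> Ein_positive w1 \<subseteq> Ein_positive w2"
    and "Ein_positive w0 \<inter> Ein_positive w1 \<noteq> {}"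
    and "\<not> Ein_positive w0 \<subseteq> Ein_positive w2"
  shows "top_of_set Ein_tilde frontier_of Ein_positive w0 \<inter> Ein_positive w1
       = top_of_set Ein_tilde frontier_of Ein_positive w0 \<inter> Ein_positive w2"
  using frontier_of_Ein_positive_subset[of w0] boundary_pform_pos_iff_if_nested[OF assms]
    frontier_of_subset_topspace[of "top_of_set Ein_tilde" "Ein_positive w0"]
  by (auto simp: Ein_positive_def)

lemma halfspace_images_nested:
  fixes v :: "'a::real_inner \<times> 'b::real_inner"
  assumes bij: "bij_betw s M0 UNIV" and "v \<noteq> 0"
    and h1: "s ` (M0 \<inter> M1) = halfspace v \<alpha>" and h2: "s ` (M0 \<inter> M2) = halfspace v \<beta>"
    and "\<beta> \<le> \<alpha>"
  shows "M0 \<inter> M1 \<subseteq> M2" "M0 \<inter> M1 \<noteq> {}" "\<not> M0 \<subseteq> M2"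
proof -
  let ?h = "\<lambda>c. (c / (norm v)\<^sup>2) *\<^sub>R pdual v"
  have "inj_on s M0" "s ` M0 = UNIV" using bij by (auto simp: bij_betw_def)
  have "s ` (M0 \<inter> M1) \<subseteq> s ` (M0 \<inter> M2)"
    using \<open>\<beta> \<le> \<alpha>\<close> by (auto simp: h1 h2 halfspace_def)
  with \<open>inj_on s M0\<close> show "M0 \<inter> M1 \<subseteq> M2"
    by (auto dest: inj_on_image_subset_iff[THEN iffD1, rotated -1])
  have "?h (\<alpha> + 1) \<in> s ` (M0 \<inter> M1)"
    using pform_scaled_pdual[OF \<open>v \<noteq> 0\<close>] by (simp add: h1 halfspace_def)
  then show "M0 \<inter> M1 \<noteq> {}" by blast
  have "?h \<beta> \<notin> s ` (M0 \<inter> M2)"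
    using pform_scaled_pdual[OF \<open>v \<noteq> 0\<close>] by (simp add: h2 halfspace_def)
  with \<open>s ` M0 = UNIV\<close> show "\<not> M0 \<subseteq> M2" by (metis Int_absorb2 UNIV_I)
qed

theorem lemma5p5:
  fixes M0 M1 M2 :: "((real \<times> (real^'p)) \<times> (real \<times> (real^'q))) set"
    and s :: "(real \<times> (real^'p)) \<times> (real \<times> (real^'q)) \<Rightarrow> (real^'p) \<times> (real^'q)"
    and v :: "(real^'p) \<times> (real^'q)"
    and \<alpha> \<beta> :: real
  assumes "min CARD('p) CARD('q) \<ge> 2"
    and "minkowski_patch M0" and "minkowski_patch M1" and "minkowski_patch M2"
    and "stereographic_projection M0 s"
    and "pform v v = 0" and "v \<noteq> 0"
    and "s ` (M0 \<inter> M1) = halfspace v \<alpha>"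
    and "s ` (M0 \<inter> M2) = halfspace v \<beta>"
  shows "(top_of_set Ein_tilde) frontier_of M0 \<inter> M1 = (top_of_set Ein_tilde) frontier_of M0 \<inter> M2"
proof -
  have dims: "DIM(real \<times> (real^'p)) \<ge> 3" "DIM(real \<times> (real^'q)) \<ge> 3"
    using assms(1) by auto
  obtain w0 w1 w2 where M: "M0 = Ein_positive w0" "M1 = Ein_positive w1" "M2 = Ein_positive w2"
    using minkowski_patch_obtain assms(2-4) by metis
  have bij: "bij_betw s M0 UNIV"
    using assms(5) by (simp add: stereographic_projection_def diffeo_betw_def)
  show ?thesis
  proof (cases "\<beta> \<le> \<alpha>")
    case True
    from halfspace_images_nested[OF bij assms(7-9) True] show ?thesis
      unfolding M by (intro frontier_of_Ein_positive_inter_eq_if_nested dims) auto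
  next
    case False
    from halfspace_images_nested[OF bij assms(7,9,8)] False have
      "top_of_set Ein_tilde frontier_of M0 \<inter> M2 = top_of_set Ein_tilde frontier_of M0 \<inter> M1"
      unfolding M by (intro frontier_of_Ein_positive_inter_eq_if_nested dims) auto
    then show ?thesis ..
  qed
qed

end
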